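(* For every integer $\ell\ge 3$, the diameter of $CK(3,\ell)$ is at most $2\ell-1$.
   Context: Let $\Sigma=\{0,1,\dots,d\}$. The cyclic Kautz digraph $CK(d,\ell)$ has as vertices all sequences $a_1\ldots a_\ell\in\Sigma^\ell$ with $a_i\neq a_{i+1}$ for $1\le i\le \ell-1$ and $a_1\neq a_\ell$, with an arc from $a_1\ldots a_\ell$ to $b_1\ldots b_\ell$ iff both are vertices and $b_i=a_{i+1}$ for $1\le i\le\ell-1$. The diameter is the maximum over ordered pairs of vertices of the directed distance. *)

theory Defs
  imports Main "HOL-Library.Extended_Nat"
begin

definition ck_vertex :: "nat \<Rightarrow> nat \<Rightarrow> nat list \<Rightarrow> bool" where
  "ck_vertex d l a \<longleftrightarrow> length a = l \<and> set a \<subseteq> {0..d}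
     \<and> (\<forall>i. Suc i < l \<longrightarrow> a ! i \<noteq> a ! Suc i)
     \<and> a ! 0 \<noteq> a ! (l - 1)"

definition ck_arcs :: "nat \<Rightarrow> nat \<Rightarrow> (nat list \<times> nat list) set" where
  "ck_arcs d l = {(a, b). ck_vertex d l a \<and> ck_vertex d l b
     \<and> (\<forall>i. Suc i < l \<longrightarrow> b ! i = a ! Suc i)}"

definition ck_dist :: "nat \<Rightarrow> nat \<Rightarrow> nat list \<Rightarrow> nat list \<Rightarrow> enat" where
  "ck_dist d l u v = (INF k \<in> {k. (u, v) \<in> ck_arcs d l ^^ k}. enat k)"

definition ck_diameter :: "nat \<Rightarrow> nat \<Rightarrow> enat" where
  "ck_diameter d l = (SUP p \<in> {(u, v). ck_vertex d l u \<and> ck_vertex d l v}.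
      ck_dist d l (fst p) (snd p))"

end

theory Submission
  imports Defs
begin

(* A walk of length l + m from u to v spells the word u y_1 ... y_m v, and such a word
  gives a walk as soon as consecutive letters differ and every window of length l has
  distinct end letters. For m = l - 1 these conditions say that y_1 ... y_(l-1) is a
  proper colouring of a path, starting next to u_(l-1), in which y_i avoids u_i and
  v_(i-1) and the last colour differs from v_0. With at least four colours every
  position has at least two admissible colours, and a backward induction along the path
  shows that at most one start colour fails; if u_(l-1) is that colour, the shorter gap
  m = l - 2 can be filled instead. *)

lemma ck_vertexD:
  assumes "ck_vertex d l u"
  shows "length u = l" and "i < l \<Longrightarrow> u ! i \<le> d"
    and "Suc i < l \<Longrightarrow> u ! i \<noteq> u ! Suc i" and "u ! 0 \<noteq> u ! (l - 1)"
  using assms nth_mem[of i u] by (auto simp: ck_vertex_def subset_iff)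

lemma ck_vertex_window:
  assumes "0 < l"
    and bounded: "\<And>t. t < l \<Longrightarrow> f (i + t) \<le> d"
    and "\<And>t. Suc t < l \<Longrightarrow> f (i + t) \<noteq> f (i + Suc t)"
    and "f i \<noteq> f (i + l - 1)"
  shows "ck_vertex d l (map f [i..<i + l])"
  unfolding ck_vertex_def
proof (intro conjI allI impI)
  show "set (map f [i..<i + l]) \<subseteq> {0..d}"
  proof clarsimp
    fix t assume "i \<le> t" "t < i + l"
    then show "f t \<le> d" using bounded[of "t - i"] by simp
  qed
qed (use assms in \<open>auto simp: add.commute\<close>)

lemma windows_relpow_ck_arcs:
  assumes "\<And>i. i \<le> k \<Longrightarrow> ck_vertex d l (map f [i..<i + l])"
  shows "(map f [0..<l], map f [k..<k + l]) \<in> ck_arcs d l ^^ k"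
  using assms
proof (induction k)
  case 0
  then show ?case by simp
next
  case (Suc k)
  have "(map f [k..<k + l], map f [Suc k..<Suc k + l]) \<in> ck_arcs d l"
    using Suc.prems[of k] Suc.prems[of "Suc k"] by (auto simp: ck_arcs_def simp del: upt_Suc)
  with Suc show ?case by auto
qed

lemma ck_dist_windows_le:
  assumes "0 < l"
    and "\<And>t. t < k + l \<Longrightarrow> f t \<le> d"
    and "\<And>t. Suc t < k + l \<Longrightarrow> f t \<noteq> f (Suc t)"
    and "\<And>i. i \<le> k \<Longrightarrow> f i \<noteq> f (i + l - 1)"
  shows "ck_dist d l (map f [0..<l]) (map f [k..<k + l]) \<le> enat k"
proof -
  have "ck_vertex d l (map f [i..<i + l])" if "i \<le> k" for i
    using that assms by (intro ck_vertex_window) auto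
  then have "(map f [0..<l], map f [k..<k + l]) \<in> ck_arcs d l ^^ k"
    by (rule windows_relpow_ck_arcs)
  then show ?thesis
    unfolding ck_dist_def by (auto intro: INF_lower2)
qed

definition splice :: "nat \<Rightarrow> nat \<Rightarrow> nat list \<Rightarrow> (nat \<Rightarrow> nat) \<Rightarrow> nat list \<Rightarrow> nat \<Rightarrow> nat" where
  "splice l m u y v t =
     (if t < l then u ! t else if t < l + m then y (t + 1 - l) else v ! (t - l - m))"

lemma splice_left: "t < l \<Longrightarrow> splice l m u y v t = u ! t"
  by (simp add: splice_def)

lemma splice_middle:
  assumes "y 0 = u ! (l - 1)" "l - 1 \<le> t" "t < l + m"
  shows "splice l m u y v t = y (t + 1 - l)"
  using assms by (cases "t = l - 1") (auto simp: splice_def)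

lemma splice_right: "l + m \<le> t \<Longrightarrow> splice l m u y v t = v ! (t - l - m)"
  by (simp add: splice_def)

(* The windows of u y_1 ... y_m v compare y i with u ! i and with v ! (l + i - m - 2),
  and u ! i (for m < i) with v ! (i - m - 1). *)
context
  fixes d l m :: nat and u v :: "nat list" and y :: "nat \<Rightarrow> nat"
  assumes l: "0 < l" and m: "m < l"
    and u: "ck_vertex d l u" and v: "ck_vertex d l v"
    and y0: "y 0 = u ! (l - 1)"
    and y: "\<And>i. 0 < i \<Longrightarrow> i \<le> m \<Longrightarrow>
      y i \<le> d \<and> y i \<noteq> y (i - 1) \<and> y i \<noteq> u ! i \<and> y i \<noteq> v ! (l + i - m - 2)"
    and ym: "y m \<noteq> v ! 0"
    and uv: "\<And>i. m < i \<Longrightarrow> i < l \<Longrightarrow> u ! i \<noteq> v ! (i - m - 1)"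
begin

lemma splice_le:
  assumes t: "t < l + m + l"
  shows "splice l m u y v t \<le> d"
proof -
  consider "t < l" | "l \<le> t" "t < l + m" | "l + m \<le> t" by linarith
  then show ?thesis
  proof cases
    case 1
    then show ?thesis using ck_vertexD(2)[OF u] by (simp add: splice_left)
  next
    case 2
    then show ?thesis using y[of "t + 1 - l"] by (simp add: splice_middle y0)
  next
    case 3
    then show ?thesis using t ck_vertexD(2)[OF v, of "t - l - m"] by (simp add: splice_right)
  qed
qed

lemma splice_Suc_neq:
  assumes t: "Suc t < l + m + l"
  shows "splice l m u y v t \<noteq> splice l m u y v (Suc t)"
proof -
  consider "Suc t < l" | "l - 1 \<le> t" "Suc t < l + m" | "Suc t = l + m" | "l + m \<le> t"
    by linarith
  then show ?thesis
  proof cases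
    case 1
    then show ?thesis using ck_vertexD(3)[OF u] by (simp add: splice_left)
  next
    case 2
    define i where "i = t + 2 - l"
    have i: "0 < i" "i \<le> m" "splice l m u y v t = y (i - 1)" "splice l m u y v (Suc t) = y i"
      using 2 l by (auto simp: i_def splice_middle y0)
    then show ?thesis using y[OF i(1,2)] by simp
  next
    case 3
    then have "splice l m u y v t = y m" "splice l m u y v (Suc t) = v ! 0"
      using l by (simp_all add: splice_middle y0 splice_right)
    then show ?thesis using ym by simp
  next
    case 4
    then have "splice l m u y v t = v ! (t - l - m)"
      "splice l m u y v (Suc t) = v ! Suc (t - l - m)"
      by (simp_all add: splice_right Suc_diff_le)
    then show ?thesis using t 4 ck_vertexD(3)[OF v, of "t - l - m"] by simp
  qed
qed

lemma splice_window_ends_neq: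
  assumes i: "i \<le> l + m"
  shows "splice l m u y v i \<noteq> splice l m u y v (i + l - 1)"
proof -
  consider "i = 0" | "0 < i" "i \<le> m" | "m < i" "i < l" | "l \<le> i" "i < l + m" | "i = l + m"
    using m i by linarith
  then show ?thesis
  proof cases
    case 1
    then show ?thesis using l ck_vertexD(4)[OF u] by (simp add: splice_left)
  next
    case 2
    then have "splice l m u y v i = u ! i" "splice l m u y v (i + l - 1) = y i"
      using m by (simp_all add: splice_left splice_middle y0)
    then show ?thesis using y[of i] 2 by simp
  next
    case 3
    then have "splice l m u y v i = u ! i" "splice l m u y v (i + l - 1) = v ! (i - m - 1)"
      by (simp_all add: splice_left splice_right)
    then show ?thesis using uv[of i] 3 by simp
  next
    case 4
    then have "splice l m u y v i = y (i + 1 - l)"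
      "splice l m u y v (i + l - 1) = v ! (l + (i + 1 - l) - m - 2)"
      using m by (simp_all add: splice_middle y0 splice_right)
    then show ?thesis using y[of "i + 1 - l"] 4 by simp
  next
    case 5
    then show ?thesis using ck_vertexD(4)[OF v] by (simp add: splice_right)
  qed
qed

lemma ck_dist_le_splice: "ck_dist d l u v \<le> enat (l + m)"
proof -
  have "map (splice l m u y v) [0..<l] = u"
    by (rule nth_equalityI) (simp_all add: splice_left ck_vertexD(1)[OF u])
  moreover have "map (splice l m u y v) [l + m..<l + m + l] = v"
    by (rule nth_equalityI) (simp_all add: splice_right ck_vertexD(1)[OF v])
  moreover have "ck_dist d l (map (splice l m u y v) [0..<l])
      (map (splice l m u y v) [l + m..<l + m + l]) \<le> enat (l + m)"
    using l splice_le splice_Suc_neq splice_window_ends_neq by (rule ck_dist_windows_le)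
  ultimately show ?thesis by simp
qed

end

lemma colour_avoiding:
  fixes S :: "nat set"
  assumes "finite S" "card S \<le> d"
  shows "\<exists>w\<le>d. w \<notin> S"
proof (rule ccontr)
  assume "\<not> ?thesis"
  then have "{0..d} \<subseteq> S" by auto
  from card_mono[OF assms(1) this] assms(2) show False by simp
qed

lemma colour_avoiding_three:
  fixes x y z :: nat
  assumes "3 \<le> d"
  shows "\<exists>w\<le>d. w \<notin> {x, y, z}"
  using assms card_length[of "[x, y, z]"] by (intro colour_avoiding) auto

lemma colour_avoiding_four:
  fixes x y z p :: nat
  assumes "3 \<le> d" "x = y \<or> x = z \<or> y = z"
  shows "\<exists>w\<le>d. w \<notin> {x, y, z, p}"
proof -
  from assms(2) have "{x, y, z, p} = set [x, z, p] \<or> {x, y, z, p} = set [x, y, p]"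
    by auto
  then have "card {x, y, z, p} \<le> 3"
    using card_length[of "[x, z, p]"] card_length[of "[x, y, p]"] by auto
  with assms(1) show ?thesis by (intro colour_avoiding) auto
qed

definition path_colourable :: "nat \<Rightarrow> (nat \<Rightarrow> nat set) \<Rightarrow> nat \<Rightarrow> nat \<Rightarrow> nat \<Rightarrow> nat \<Rightarrow> bool" where
  "path_colourable d F j p n e \<longleftrightarrow>
     (\<exists>y. y j = p \<and> (\<forall>i\<in>{j<..n}. y i \<le> d \<and> y i \<notin> F i \<and> y i \<noteq> y (i - 1)) \<and> y n \<noteq> e)"

lemma path_colourable_refl: "p \<noteq> e \<Longrightarrow> path_colourable d F j p j e"
  unfolding path_colourable_def by (rule exI[of _ "\<lambda>_. p"]) auto

lemma path_colourable_Suc: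
  assumes "j < n" "z \<le> d" "z \<notin> F (Suc j)" "z \<noteq> p" "path_colourable d F (Suc j) z n e"
  shows "path_colourable d F j p n e"
proof -
  obtain y where y: "y (Suc j) = z" "y n \<noteq> e"
    and proper: "\<forall>i\<in>{Suc j<..n}. y i \<le> d \<and> y i \<notin> F i \<and> y i \<noteq> y (i - 1)"
    using assms(5) unfolding path_colourable_def by blast
  let ?y = "y(j := p)"
  have "?y i \<le> d \<and> ?y i \<notin> F i \<and> ?y i \<noteq> ?y (i - 1)" if "i \<in> {j<..n}" for i
  proof (cases "i = Suc j")
    case True
    then show ?thesis using y(1) assms(2-4) by simp
  next
    case False
    with that have "i \<in> {Suc j<..n}" "i - 1 \<noteq> j" by auto
    then show ?thesis using proper by auto
  qed
  then show ?thesis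
    unfolding path_colourable_def using y(2) assms(1) by (intro exI[of _ ?y]) auto
qed

(* The exceptional start colour c of the second disjunct still extends once b is shifted
  by one and the path is shortened by one; this is the gap of the walk of length 2l - 2. *)
definition all_but_one_colourable :: "nat \<Rightarrow> (nat \<Rightarrow> nat) \<Rightarrow> (nat \<Rightarrow> nat) \<Rightarrow> nat \<Rightarrow> nat \<Rightarrow> nat \<Rightarrow> bool" where
  "all_but_one_colourable d a b j n e \<longleftrightarrow>
     (\<forall>p. path_colourable d (\<lambda>i. {a i, b i}) j p n e) \<or>
     (\<exists>c\<le>d. c \<noteq> b (Suc j) \<and> a n \<noteq> e \<and>
        (\<forall>p. p \<noteq> c \<longrightarrow> path_colourable d (\<lambda>i. {a i, b i}) j p n e) \<and>
        path_colourable d (\<lambda>i. {a i, b (Suc i)}) j c (n - 1) e)"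

lemma path_colourable_Suc_all:
  assumes "3 \<le> d" "j < n" "a (Suc j) = b (Suc j) \<or> a (Suc j) = c \<or> b (Suc j) = c"
    and "\<And>q. q \<noteq> c \<Longrightarrow> path_colourable d (\<lambda>i. {a i, b i}) (Suc j) q n e"
  shows "path_colourable d (\<lambda>i. {a i, b i}) j p n e"
proof -
  obtain w where w: "w \<le> d" "w \<notin> {a (Suc j), b (Suc j), c, p}"
    using colour_avoiding_four[OF assms(1,3)] by blast
  show ?thesis
    by (rule path_colourable_Suc[where z = w]) (use w assms(2,4) in auto)
qed

lemma all_but_one_colourable_last:
  assumes "3 \<le> d"
  shows "all_but_one_colourable d a b j (Suc j) e"
proof (cases "a (Suc j) = b (Suc j) \<or> a (Suc j) = e \<or> b (Suc j) = e")
  case True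
  have "path_colourable d (\<lambda>i. {a i, b i}) j p (Suc j) e" for p
    by (rule path_colourable_Suc_all[OF assms, where c = e])
      (use True in \<open>auto intro: path_colourable_refl\<close>)
  then show ?thesis unfolding all_but_one_colourable_def by blast
next
  case False
  obtain c where c: "c \<le> d" "c \<notin> {a (Suc j), b (Suc j), e}"
    using colour_avoiding_three[OF assms] by blast
  have "path_colourable d (\<lambda>i. {a i, b i}) j p (Suc j) e" if "p \<noteq> c" for p
    by (rule path_colourable_Suc[where z = c]) (use c that in \<open>auto intro: path_colourable_refl\<close>)
  moreover have "path_colourable d (\<lambda>i. {a i, b (Suc i)}) j c (Suc j - 1) e"
    using c by (auto intro: path_colourable_refl)
  ultimately show ?thesis
    unfolding all_but_one_colourable_def using c False by blast
qed

lemma all_but_one_colourable_Suc: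
  assumes "3 \<le> d" "Suc j < n" "all_but_one_colourable d a b (Suc j) n e"
  shows "all_but_one_colourable d a b j n e"
proof -
  let ?F = "\<lambda>i. {a i, b i}" and ?G = "\<lambda>i. {a i, b (Suc i)}"
  from assms(3) consider (all) "\<forall>p. path_colourable d ?F (Suc j) p n e"
    | (but) c' where "c' \<le> d" "c' \<noteq> b (Suc (Suc j))" "a n \<noteq> e"
        "\<forall>p. p \<noteq> c' \<longrightarrow> path_colourable d ?F (Suc j) p n e"
        "path_colourable d ?G (Suc j) c' (n - 1) e"
    unfolding all_but_one_colourable_def by blast
  then show ?thesis
  proof cases
    case all
    have "path_colourable d ?F j p n e" for p
      by (rule path_colourable_Suc_all[OF assms(1), where c = "a (Suc j)"])
        (use assms(2) all in auto)
    then show ?thesis unfolding all_but_one_colourable_def by blast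
  next
    case but
    show ?thesis
    proof (cases "a (Suc j) = b (Suc j) \<or> a (Suc j) = c' \<or> b (Suc j) = c'")
      case True
      have "path_colourable d ?F j p n e" for p
        by (rule path_colourable_Suc_all[OF assms(1), where c = c'])
          (use assms(2) True but(4) in auto)
      then show ?thesis unfolding all_but_one_colourable_def by blast
    next
      case False
      obtain c where c: "c \<le> d" "c \<notin> {a (Suc j), b (Suc j), c'}"
        using colour_avoiding_three[OF assms(1)] by blast
      have "path_colourable d ?F j p n e" if "p \<noteq> c" for p
        by (rule path_colourable_Suc[where z = c]) (use that c assms(2) but in auto)
      moreover have "path_colourable d ?G j c (n - 1) e"
        by (rule path_colourable_Suc[where z = c']) (use c False assms(2) but in auto)
      ultimately show ?thesis
        unfolding all_but_one_colourable_def using c but(3) by blast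
    qed
  qed
qed

lemma all_but_one_colourable:
  assumes "3 \<le> d" "j < n"
  shows "all_but_one_colourable d a b j n e"
proof -
  obtain m where n: "n = Suc m" using assms(2) by (cases n) auto
  have "j \<le> m" using assms(2) n by simp
  then show ?thesis unfolding n
  proof (induction j rule: inc_induct)
    case base
    show ?case using all_but_one_colourable_last[OF assms(1)] .
  next
    case (step j)
    then show ?case using all_but_one_colourable_Suc[OF assms(1)] by simp
  qed
qed

lemma ck_dist_le_long_gap:
  assumes l: "2 \<le> l" and u: "ck_vertex d l u" and v: "ck_vertex d l v"
    and "path_colourable d (\<lambda>i. {u ! i, v ! (i - 1)}) 0 (u ! (l - 1)) (l - 1) (v ! 0)"
  shows "ck_dist d l u v \<le> enat (2 * l - 1)"
proof -
  obtain y where "y 0 = u ! (l - 1)" "y (l - 1) \<noteq> v ! 0"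
    and "\<forall>i\<in>{0<..l - 1}. y i \<le> d \<and> y i \<notin> {u ! i, v ! (i - 1)} \<and> y i \<noteq> y (i - 1)"
    using assms(4) unfolding path_colourable_def by blast
  then have "ck_dist d l u v \<le> enat (l + (l - 1))"
    using l by (intro ck_dist_le_splice[OF _ _ u v]) auto
  also have "l + (l - 1) = 2 * l - 1"
    using l by arith
  finally show ?thesis .
qed

lemma ck_dist_le_short_gap:
  assumes l: "2 \<le> l" and u: "ck_vertex d l u" and v: "ck_vertex d l v"
    and uv: "u ! (l - 1) \<noteq> v ! 0"
    and "path_colourable d (\<lambda>i. {u ! i, v ! i}) 0 (u ! (l - 1)) (l - 1 - 1) (v ! 0)"
  shows "ck_dist d l u v \<le> enat (2 * l - 2)"
proof -
  obtain y where "y 0 = u ! (l - 1)" "y (l - 1 - 1) \<noteq> v ! 0"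
    and "\<forall>i\<in>{0<..l - 1 - 1}. y i \<le> d \<and> y i \<notin> {u ! i, v ! i} \<and> y i \<noteq> y (i - 1)"
    using assms(5) unfolding path_colourable_def by blast
  moreover have "u ! i \<noteq> v ! (i - (l - 1 - 1) - 1)" if "l - 1 - 1 < i" "i < l" for i
  proof -
    have "i = l - 1"
      using that by arith
    then show ?thesis
      using uv l by simp
  qed
  ultimately have "ck_dist d l u v \<le> enat (l + (l - 1 - 1))"
    using l by (intro ck_dist_le_splice[OF _ _ u v]) auto
  also have "l + (l - 1 - 1) = 2 * l - 2"
    using l by arith
  finally show ?thesis .
qed

lemma ck_dist_le:
  assumes d: "3 \<le> d" and l: "2 \<le> l" and u: "ck_vertex d l u" and v: "ck_vertex d l v"
  shows "ck_dist d l u v \<le> enat (2 * l - 1)"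
proof (cases "path_colourable d (\<lambda>i. {u ! i, v ! (i - 1)}) 0 (u ! (l - 1)) (l - 1) (v ! 0)")
  case True
  then show ?thesis by (rule ck_dist_le_long_gap[OF l u v])
next
  case False
  have "all_but_one_colourable d ((!) u) (\<lambda>i. v ! (i - 1)) 0 (l - 1) (v ! 0)"
    using d l by (intro all_but_one_colourable) auto
  with False obtain c where uv: "u ! (l - 1) \<noteq> v ! 0"
    and others: "\<forall>p. p \<noteq> c \<longrightarrow>
      path_colourable d (\<lambda>i. {u ! i, v ! (i - 1)}) 0 p (l - 1) (v ! 0)"
    and short: "path_colourable d (\<lambda>i. {u ! i, v ! (Suc i - 1)}) 0 c (l - 1 - 1) (v ! 0)"
    unfolding all_but_one_colourable_def by blast
  have "c = u ! (l - 1)"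
    using others[rule_format, of "u ! (l - 1)"] False by auto
  with short have "ck_dist d l u v \<le> enat (2 * l - 2)"
    by (intro ck_dist_le_short_gap[OF l u v uv]) simp
  also have "\<dots> \<le> enat (2 * l - 1)"
    by simp
  finally show ?thesis .
qed

lemma ck_diameter_le:
  assumes "3 \<le> d" "2 \<le> l"
  shows "ck_diameter d l \<le> enat (2 * l - 1)"
  unfolding ck_diameter_def by (rule SUP_least) (use assms ck_dist_le in auto)

theorem lemma7:
  fixes l :: nat
  assumes "l \<ge> 3"
  shows "ck_diameter 3 l \<le> enat (2 * l - 1)"
  using assms by (intro ck_diameter_le) auto

end
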